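(* Let $\alpha,\beta\in\mathbb{R}$. The sequence $\{k^2+\alpha k+\beta\}_{k=0}^{\infty}$ is a classical multiplier sequence if and only if $\alpha\ge -1$ and $0\le\beta\le\frac14(\alpha+1)^2$.
   Context: A real sequence $\{\gamma_k\}_{k=0}^{\infty}$ is a classical multiplier sequence if for every real polynomial $\sum_{k=0}^n a_kx^k$ having only real zeros, the polynomial $\sum_{k=0}^n a_k\gamma_kx^k$ also has only real zeros. *)

theory Defs
  imports "HOL-Computational_Algebra.Polynomial"
begin

text \<open>A real polynomial has only real zeros. By the standard convention
  (Polya--Schur) the zero polynomial is regarded as having only real zeros.\<close>
definition only_real_zeros :: "real poly \<Rightarrow> bool" where
  "only_real_zeros p \<longleftrightarrow>
     p = 0 \<or> (\<forall>z::complex. poly (map_poly complex_of_real p) z = 0 \<longrightarrow> z \<in> \<real>)"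

definition classical_multiplier_sequence :: "(nat \<Rightarrow> real) \<Rightarrow> bool" where
  "classical_multiplier_sequence \<gamma> \<longleftrightarrow>
     (\<forall>p::real poly. only_real_zeros p \<longrightarrow>
        only_real_zeros (Abs_poly (\<lambda>k. \<gamma> k * coeff p k)))"

end

(*
  Put c = alpha + 1 and d = beta.  Multiplying the k-th coefficient by k^2 + alpha k + beta is the
  Cauchy-Euler operator p |-> x^2 p'' + c x p' + d p.

  Sufficiency: at a point x of the upper half-plane the image of p is L(p), where L is the linear
  functional q |-> sum_j gamma_j x^j q_j.  The symbol t |-> L((X + t)^m) of L has all its zeros in
  the open lower half-plane: after the substitution s = (x + t)/x this is a real quadratic with
  nonnegative coefficients and nonnegative discriminant.  Splitting off a real linear factor X - r
  of p replaces L by a functional whose symbol is (m G - (t + r) G')/m for the old symbol G, and a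
  logarithmic-derivative estimate shows that this keeps all zeros in the lower half-plane.  By
  induction over the real zeros of p, L(p) is nonzero.

  Necessity: the test polynomial x^(K+2) - x^K shows gamma_K gamma_(K+2) >= 0, which together with
  the convexity of gamma forces gamma >= 0; the test polynomials (1 + x)^n for large n have images
  with nonreal zeros unless 4 beta <= (alpha + 1)^2; and the two conditions together give
  alpha >= -1.
*)

theory Submission
  imports Defs "HOL-Computational_Algebra.Fundamental_Theorem_Algebra"
begin

section \<open>Coefficient functionals and their symbols\<close>

definition coeff_functional :: "(nat \<Rightarrow> 'a::comm_semiring_0) \<Rightarrow> 'a poly \<Rightarrow> 'a" where
  "coeff_functional \<mu> q = (\<Sum>j\<le>degree q. \<mu> j * coeff q j)"

lemma coeff_functional_eq_sum:
  assumes "degree q \<le> N"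
  shows "coeff_functional \<mu> q = (\<Sum>j\<le>N. \<mu> j * coeff q j)"
  unfolding coeff_functional_def
  by (rule sum.mono_neutral_left) (use assms in \<open>auto simp: coeff_eq_0\<close>)

lemma coeff_functional_smult: "coeff_functional \<mu> (smult a q) = a * coeff_functional \<mu> q"
proof -
  have "coeff_functional \<mu> (smult a q) = (\<Sum>j\<le>degree q. \<mu> j * coeff (smult a q) j)"
    by (rule coeff_functional_eq_sum) (rule degree_smult_le)
  thus ?thesis by (simp add: coeff_functional_def sum_distrib_left mult_ac)
qed

lemma coeff_functional_add_scaled:
  "coeff_functional (\<lambda>j. \<mu> j + b * \<nu> j) q = coeff_functional \<mu> q + b * coeff_functional \<nu> q"
  by (simp add: coeff_functional_def sum.distrib sum_distrib_left algebra_simps)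

lemma coeff_functional_linear_factor:
  fixes \<mu> :: "nat \<Rightarrow> 'a::comm_ring_1"
  shows "coeff_functional \<mu> ([:-r, 1:] * q) = coeff_functional (\<lambda>j. \<mu> (Suc j) - r * \<mu> j) q"
proof -
  let ?D = "degree q"
  have "degree ([:-r, 1:] * q) \<le> Suc ?D"
    using degree_mult_le[of "[:-r, 1:]" q] by simp
  then have "coeff_functional \<mu> ([:-r, 1:] * q) = (\<Sum>j\<le>Suc ?D. \<mu> j * coeff ([:-r, 1:] * q) j)"
    by (rule coeff_functional_eq_sum)
  also have "\<dots> = (\<Sum>j\<le>Suc ?D. \<mu> j * (-r * coeff q j)) + (\<Sum>j\<le>Suc ?D. \<mu> j * coeff (pCons 0 q) j)"
    by (simp add: sum.distrib[symmetric] algebra_simps)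
  also have "(\<Sum>j\<le>Suc ?D. \<mu> j * (-r * coeff q j)) = (\<Sum>j\<le>?D. \<mu> j * (-r * coeff q j))"
    by (simp add: coeff_eq_0)
  also have "(\<Sum>j\<le>Suc ?D. \<mu> j * coeff (pCons 0 q) j) = (\<Sum>j\<le>?D. \<mu> (Suc j) * coeff q j)"
    by (subst sum.atMost_Suc_shift) simp
  also have "(\<Sum>j\<le>?D. \<mu> j * (-r * coeff q j)) + (\<Sum>j\<le>?D. \<mu> (Suc j) * coeff q j) =
      coeff_functional (\<lambda>j. \<mu> (Suc j) - r * \<mu> j) q"
    unfolding coeff_functional_def sum.distrib[symmetric] by (intro sum.cong) (simp_all add: algebra_simps)
  finally show ?thesis .
qed

lemma smult_sum_right: "smult a (sum f A) = (\<Sum>x\<in>A. smult a (f x))"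
  by (induction A rule: infinite_finite_induct) (simp_all add: smult_add_right)

lemma pderiv_sum:
  fixes f :: "'b \<Rightarrow> 'a::idom poly"
  shows "pderiv (sum f A) = (\<Sum>x\<in>A. pderiv (f x))"
  by (induction A rule: infinite_finite_induct) (simp_all add: pderiv_add)

definition coeff_symbol :: "nat \<Rightarrow> (nat \<Rightarrow> 'a::comm_semiring_1) \<Rightarrow> 'a poly" where
  "coeff_symbol m \<mu> = (\<Sum>j\<le>m. monom (of_nat (m choose j) * \<mu> j) (m - j))"

lemma poly_coeff_symbol: "poly (coeff_symbol m \<mu>) t = coeff_functional \<mu> ([:t, 1:] ^ m)"
proof -
  have "coeff_functional \<mu> ([:t, 1:] ^ m) = (\<Sum>j\<le>m. \<mu> j * coeff ([:t, 1:] ^ m) j)"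
    by (rule coeff_functional_eq_sum) (simp add: order_trans[OF degree_power_le])
  also have "\<dots> = (\<Sum>j\<le>m. of_nat (m choose j) * \<mu> j * t ^ (m - j))"
    by (intro sum.cong refl) (simp add: coeff_linear_poly_power mult_ac)
  finally show ?thesis by (simp add: coeff_symbol_def poly_sum poly_monom)
qed

lemma degree_coeff_symbol: "degree (coeff_symbol m \<mu>) \<le> m"
  unfolding coeff_symbol_def by (intro degree_sum_le) (auto intro: order_trans[OF degree_monom_le])

lemma pderiv_coeff_symbol:
  fixes \<mu> :: "nat \<Rightarrow> 'a::idom"
  shows "pderiv (coeff_symbol (Suc n) \<mu>) = smult (of_nat (Suc n)) (coeff_symbol n \<mu>)"
proof -
  have "pderiv (coeff_symbol (Suc n) \<mu>) =
      (\<Sum>j\<le>Suc n. monom (of_nat (Suc n - j) * (of_nat (Suc n choose j) * \<mu> j)) (Suc n - j - 1))"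
    by (simp only: coeff_symbol_def pderiv_sum pderiv_monom)
  also have "\<dots> = (\<Sum>j\<le>n. monom (of_nat (Suc n - j) * (of_nat (Suc n choose j) * \<mu> j)) (n - j))"
    by (subst sum.atMost_Suc) simp
  also have "\<dots> = (\<Sum>j\<le>n. smult (of_nat (Suc n)) (monom (of_nat (n choose j) * \<mu> j) (n - j)))"
  proof (intro sum.cong refl)
    fix j assume "j \<in> {..n}"
    have "(Suc n - j) * (Suc n choose j) = Suc n * (n choose j)"
      using binomial_absorb_comp[of "Suc n" j] by simp
    then have "(of_nat (Suc n - j) :: 'a) * of_nat (Suc n choose j) = of_nat (Suc n) * of_nat (n choose j)"
      by (metis of_nat_mult)
    then show "monom (of_nat (Suc n - j) * (of_nat (Suc n choose j) * \<mu> j)) (n - j) =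
        smult (of_nat (Suc n)) (monom (of_nat (n choose j) * \<mu> j) (n - j))"
      by (simp add: smult_monom mult.assoc[symmetric])
  qed
  finally show ?thesis by (simp add: coeff_symbol_def smult_sum_right)
qed

lemma coeff_symbol_linear_factor:
  fixes \<mu> :: "nat \<Rightarrow> 'a::idom"
  shows "of_nat (Suc n) * poly (coeff_symbol n (\<lambda>j. \<mu> (Suc j) - r * \<mu> j)) t =
    of_nat (Suc n) * poly (coeff_symbol (Suc n) \<mu>) t - (t + r) * poly (pderiv (coeff_symbol (Suc n) \<mu>)) t"
proof -
  define X where "X = coeff_functional (\<lambda>j. \<mu> (Suc j)) ([:t, 1:] ^ n)"
  define Y where "Y = coeff_functional \<mu> ([:t, 1:] ^ n)"
  have shifted: "poly (coeff_symbol n (\<lambda>j. \<mu> (Suc j) - r * \<mu> j)) t = X - r * Y"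
    using coeff_functional_add_scaled[of "\<lambda>j. \<mu> (Suc j)" "-r" \<mu>]
    by (simp add: poly_coeff_symbol X_def Y_def)
  have "poly (coeff_symbol (Suc n) \<mu>) t = coeff_functional \<mu> ([:-(-t), 1:] * [:t, 1:] ^ n)"
    by (simp add: poly_coeff_symbol)
  also have "\<dots> = X + t * Y"
    using coeff_functional_add_scaled[of "\<lambda>j. \<mu> (Suc j)" t \<mu>]
    by (simp only: coeff_functional_linear_factor) (simp add: X_def Y_def)
  finally have symbol: "poly (coeff_symbol (Suc n) \<mu>) t = X + t * Y" .
  have derivative: "poly (pderiv (coeff_symbol (Suc n) \<mu>)) t = of_nat (Suc n) * Y"
    by (simp add: pderiv_coeff_symbol poly_coeff_symbol Y_def)
  show ?thesis unfolding shifted symbol derivative by (simp add: algebra_simps)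
qed

section \<open>Stability of symbols under splitting off real zeros\<close>

lemma poly_pderiv_prod_linear_factors:
  fixes \<rho> :: "nat \<Rightarrow> complex"
  assumes "poly (\<Prod>i<k. [:-\<rho> i, 1:]) t \<noteq> 0"
  shows "poly (pderiv (\<Prod>i<k. [:-\<rho> i, 1:])) t =
    poly (\<Prod>i<k. [:-\<rho> i, 1:]) t * (\<Sum>i<k. 1 / (t - \<rho> i))"
  using assms
proof (induction k)
  case 0 then show ?case by simp
next
  case (Suc k)
  define P where "P = (\<Prod>i<k. [:-\<rho> i, 1:])"
  have P_Suc: "(\<Prod>i<Suc k. [:-\<rho> i, 1:]) = P * [:-\<rho> k, 1:]" by (simp add: P_def)
  have nonzero: "poly P t \<noteq> 0" "t - \<rho> k \<noteq> 0" using Suc.prems unfolding P_Suc by auto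
  have IH: "poly (pderiv P) t = poly P t * (\<Sum>i<k. 1 / (t - \<rho> i))"
    using Suc.IH nonzero(1) by (simp add: P_def)
  have "pderiv [:-\<rho> k, 1:] = 1" by (simp add: pderiv_pCons)
  then have "pderiv (P * [:-\<rho> k, 1:]) = P + [:-\<rho> k, 1:] * pderiv P"
    by (simp only: pderiv_mult mult_1_right)
  then have derivative: "poly (pderiv (P * [:-\<rho> k, 1:])) t =
      poly P t + (t - \<rho> k) * (poly P t * (\<Sum>i<k. 1 / (t - \<rho> i)))"
    by (simp add: IH left_diff_distrib)
  have product: "poly (P * [:-\<rho> k, 1:]) t = poly P t * (t - \<rho> k)" by (simp add: algebra_simps)
  have sum: "(\<Sum>i<Suc k. 1 / (t - \<rho> i)) = (\<Sum>i<k. 1 / (t - \<rho> i)) + 1 / (t - \<rho> k)" by simp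
  show ?case unfolding P_Suc product sum derivative using nonzero by (simp add: field_simps)
qed

lemma inverse_mem_lower_disk:
  fixes z :: complex and h :: real
  assumes h: "h > 0" and z: "Im z > h"
  shows "cmod (1 / z + \<i> * complex_of_real (1 / (2 * h))) < 1 / (2 * h)"
proof -
  define a b N c where "a = Re z" and "b = Im z" and "N = a\<^sup>2 + b\<^sup>2" and "c = 1 / (2 * h)"
  have N: "N > 0" using z h unfolding N_def b_def by (smt (verit) zero_less_power2 sum_power2_gt_zero_iff)
  have Re: "Re (1 / z + \<i> * complex_of_real c) = a / N"
    by (simp add: Re_divide a_def b_def N_def)
  have Im: "Im (1 / z + \<i> * complex_of_real c) = c - b / N"
    by (simp add: Im_divide a_def b_def N_def)
  have "(a / N)\<^sup>2 + (c - b / N)\<^sup>2 = (a\<^sup>2 + b\<^sup>2) / N\<^sup>2 - 2 * c * b / N + c\<^sup>2"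
    using N by (simp add: field_simps power2_eq_square)
  also have "\<dots> = N / N\<^sup>2 - 2 * c * b / N + c\<^sup>2" by (simp add: N_def)
  also have "\<dots> = (1 - 2 * c * b) / N + c\<^sup>2"
    using N by (simp add: field_simps power2_eq_square)
  also have "\<dots> < c\<^sup>2"
    using z h N by (simp add: c_def b_def field_simps)
  finally have "(cmod (1 / z + \<i> * complex_of_real c))\<^sup>2 < c\<^sup>2"
    by (simp only: cmod_power2 Re Im)
  moreover have "c \<ge> 0" using h by (simp add: c_def)
  ultimately show ?thesis unfolding c_def[symmetric] using power2_less_imp_less by blast
qed

lemma sum_inverse_mem_lower_disk:
  fixes w :: "nat \<Rightarrow> complex" and h :: real
  assumes h: "h > 0" and k: "k \<ge> 1" and w: "\<And>i. i < k \<Longrightarrow> Im (w i) > h"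
  shows "cmod ((\<Sum>i<k. 1 / w i) + \<i> * complex_of_real (real k / (2 * h))) < real k / (2 * h)"
proof -
  let ?c = "1 / (2 * h)"
  have "cmod (\<Sum>i<k. 1 / w i + \<i> * complex_of_real ?c) \<le> (\<Sum>i<k. cmod (1 / w i + \<i> * complex_of_real ?c))"
    by (rule norm_sum)
  also have "\<dots> < (\<Sum>i<k. ?c)"
    using k w h by (intro sum_strict_mono inverse_mem_lower_disk) (auto simp: lessThan_empty_iff)
  finally show ?thesis by (simp add: sum.distrib ac_simps)
qed

lemma scaled_inverse_not_mem_lower_disk:
  fixes u :: complex and h M :: real
  assumes h: "Im u = h" "h > 0" and M: "real k \<le> M"
  shows "real k / (2 * h) \<le> cmod (complex_of_real M / u + \<i> * complex_of_real (real k / (2 * h)))"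
proof -
  define a N c where "a = Re u" and "N = a\<^sup>2 + h\<^sup>2" and "c = real k / (2 * h)"
  have N: "N > 0" using h unfolding N_def by (smt (verit) zero_less_power2 sum_power2_gt_zero_iff)
  have Re: "Re (complex_of_real M / u + \<i> * complex_of_real c) = M * a / N"
    by (simp add: Re_divide a_def N_def h)
  have Im: "Im (complex_of_real M / u + \<i> * complex_of_real c) = c - M * h / N"
    by (simp add: Im_divide a_def N_def h)
  have "(M * a / N)\<^sup>2 + (c - M * h / N)\<^sup>2 = M\<^sup>2 * (a\<^sup>2 + h\<^sup>2) / N\<^sup>2 - M * (2 * c * h) / N + c\<^sup>2"
    using N by (simp add: field_simps power2_eq_square)
  also have "\<dots> = M\<^sup>2 * N / N\<^sup>2 - M * (2 * c * h) / N + c\<^sup>2" by (simp only: N_def)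
  also have "\<dots> = (M\<^sup>2 - M * (2 * c * h)) / N + c\<^sup>2"
    using N by (simp add: field_simps power2_eq_square)
  also have "2 * c * h = real k" using h by (simp add: c_def)
  also have "(M\<^sup>2 - M * real k) / N + c\<^sup>2 \<ge> c\<^sup>2"
  proof -
    have "0 \<le> M" using M of_nat_0_le_iff[of k] by linarith
    moreover have "0 \<le> M - real k" using M by linarith
    ultimately have "0 \<le> M * (M - real k)" by (rule mult_nonneg_nonneg)
    moreover have "M\<^sup>2 - M * real k = M * (M - real k)" by (simp add: power2_eq_square right_diff_distrib)
    ultimately have "0 \<le> (M\<^sup>2 - M * real k) / N" using N by simp
    then show ?thesis by linarith
  qed
  finally have "c\<^sup>2 \<le> (cmod (complex_of_real M / u + \<i> * complex_of_real c))\<^sup>2"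
    by (simp only: cmod_power2 Re Im)
  then show ?thesis unfolding c_def[symmetric] by (metis power2_le_imp_le norm_ge_zero)
qed

lemma Im_sum_inverse_neg:
  fixes w :: "nat \<Rightarrow> complex"
  assumes k: "k \<ge> 1" and w: "\<And>i. i < k \<Longrightarrow> Im (w i) > 0"
  shows "Im (\<Sum>i<k. 1 / w i) < 0"
proof -
  have "0 < (\<Sum>i<k. - Im (1 / w i))"
  proof (rule sum_pos)
    fix i assume "i \<in> {..<k}"
    then have pos: "Im (w i) > 0" using w by simp
    then have "(Re (w i))\<^sup>2 + (Im (w i))\<^sup>2 > 0"
      by (smt (verit) zero_less_power2 sum_power2_gt_zero_iff)
    then show "0 < - Im (1 / w i)" using pos by (simp add: Im_divide divide_neg_pos)
  qed (use k in \<open>auto simp: lessThan_empty_iff\<close>)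
  then show ?thesis by (simp add: Im_sum sum_negf)
qed

lemma real_ne_times_sum_inverse:
  fixes \<rho> :: "nat \<Rightarrow> complex" and t r :: complex and M :: real
  assumes k: "k \<ge> 1" and \<rho>: "\<And>i. i < k \<Longrightarrow> Im (\<rho> i) < 0" and t: "Im t \<ge> 0"
    and r: "Im r = 0" and M: "real k \<le> M"
  shows "(t + r) * (\<Sum>i<k. 1 / (t - \<rho> i)) \<noteq> complex_of_real M"
proof
  define S where "S = (\<Sum>i<k. 1 / (t - \<rho> i))"
  assume "(t + r) * (\<Sum>i<k. 1 / (t - \<rho> i)) = complex_of_real M"
  then have eq: "(t + r) * S = complex_of_real M" by (simp add: S_def)
  have "M > 0" using k M by simp
  then have "t + r \<noteq> 0" using eq by auto
  then have S: "S = complex_of_real M / (t + r)" using eq by (simp add: field_simps)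
  have Im_t_r: "Im (t + r) = Im t" using r by simp
  show False
  proof (cases "Im t = 0")
    case True
    have "Im S < 0"
      unfolding S_def using k \<rho> True by (intro Im_sum_inverse_neg) auto
    moreover have "Im S = 0" using True Im_t_r by (simp add: S Im_divide)
    ultimately show False by simp
  next
    case False
    then have h: "Im t > 0" using t by simp
    have "cmod (S + \<i> * complex_of_real (real k / (2 * Im t))) < real k / (2 * Im t)"
      unfolding S_def using k \<rho> h by (intro sum_inverse_mem_lower_disk) auto
    moreover have "real k / (2 * Im t) \<le> cmod (S + \<i> * complex_of_real (real k / (2 * Im t)))"
      unfolding S using Im_t_r h M by (intro scaled_inverse_not_mem_lower_disk) auto
    ultimately show False by simp
  qed
qed

lemma poly_prod_linear_factors_root:
  fixes \<rho> :: "nat \<Rightarrow> 'a::comm_ring_1"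
  assumes "i < k"
  shows "poly (\<Prod>j<k. [:-\<rho> j, 1:]) (\<rho> i) = 0"
  unfolding poly_prod using assms by (intro prod_zero bexI[of _ i]) auto

lemma stable_poly_laguerre_nonzero:
  fixes g :: "complex poly"
  assumes stable: "\<And>z. poly g z = 0 \<Longrightarrow> Im z < 0" and degree: "degree g \<le> Suc n"
    and t: "Im t \<ge> 0" and r: "Im r = 0"
  shows "(t + r) * poly (pderiv g) t \<noteq> of_nat (Suc n) * poly g t"
proof
  assume laguerre: "(t + r) * poly (pderiv g) t = of_nat (Suc n) * poly g t"
  have g_t: "poly g t \<noteq> 0" using stable t by force
  obtain \<rho> where g_factors: "smult (lead_coeff g) (\<Prod>i<degree g. [:-\<rho> i, 1:]) = g"
    by (rule complex_poly_decompose')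
  define k P c where "k = degree g" and "P = (\<Prod>i<k. [:-\<rho> i, 1:])" and "c = lead_coeff g"
  have g_P: "g = smult c P" using g_factors by (simp add: P_def k_def c_def)
  have c: "c \<noteq> 0" using g_t by (auto simp: c_def)
  have P_t: "poly P t \<noteq> 0" using g_t g_P by simp
  have \<rho>: "Im (\<rho> i) < 0" if "i < k" for i
    using stable poly_prod_linear_factors_root[OF that, of \<rho>] g_P by (simp add: P_def)
  have "poly (pderiv g) t = c * (poly P t * (\<Sum>i<k. 1 / (t - \<rho> i)))"
    using poly_pderiv_prod_linear_factors[of \<rho> k t] P_t by (simp add: g_P pderiv_smult P_def)
  then have "(c * poly P t) * of_nat (Suc n) = (c * poly P t) * ((t + r) * (\<Sum>i<k. 1 / (t - \<rho> i)))"
    using laguerre g_P by (simp only: poly_smult mult_ac)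
  then have eq: "(t + r) * (\<Sum>i<k. 1 / (t - \<rho> i)) = complex_of_real (real (Suc n))"
    using c P_t by (simp only: mult_cancel_left) simp
  show False
  proof (cases "k = 0")
    case True
    have "complex_of_real (real (Suc n)) \<noteq> 0" by (simp only: of_real_eq_0_iff of_nat_eq_0_iff)
    then show False using eq True by simp
  next
    case False
    moreover have "k \<le> Suc n" using degree by (simp add: k_def)
    ultimately show False using real_ne_times_sum_inverse[of k \<rho> t r "real (Suc n)"] \<rho> t r eq by auto
  qed
qed

text \<open>A stable symbol is in particular a nonzero polynomial.\<close>
definition symbol_stable :: "nat \<Rightarrow> (nat \<Rightarrow> complex) \<Rightarrow> bool" where
  "symbol_stable m \<mu> \<longleftrightarrow> (\<forall>t. poly (coeff_symbol m \<mu>) t = 0 \<longrightarrow> Im t < 0)"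

lemma symbol_stable_linear_factor:
  assumes r: "Im r = 0" and stable: "symbol_stable (Suc n) \<mu>"
  shows "symbol_stable n (\<lambda>j. \<mu> (Suc j) - r * \<mu> j)"
  unfolding symbol_stable_def
proof (intro allI impI)
  fix t assume root: "poly (coeff_symbol n (\<lambda>j. \<mu> (Suc j) - r * \<mu> j)) t = 0"
  show "Im t < 0"
  proof (rule ccontr)
    assume "\<not> Im t < 0"
    then have "(t + r) * poly (pderiv (coeff_symbol (Suc n) \<mu>)) t \<noteq>
        of_nat (Suc n) * poly (coeff_symbol (Suc n) \<mu>) t"
      using stable r degree_coeff_symbol
      by (intro stable_poly_laguerre_nonzero) (auto simp: symbol_stable_def)
    then show False using coeff_symbol_linear_factor[of n \<mu> r t] root by simp
  qed
qed

lemma coeff_functional_real_rooted_nonzero: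
  assumes "\<And>i. i < n \<Longrightarrow> Im (r i) = 0" and "symbol_stable n \<mu>"
  shows "coeff_functional \<mu> (\<Prod>i<n. [:-r i, 1:]) \<noteq> 0"
  using assms
proof (induction n arbitrary: \<mu>)
  case 0
  have "poly (coeff_symbol 0 \<mu>) 0 = \<mu> 0" by (simp add: coeff_symbol_def poly_monom)
  then have "\<mu> 0 \<noteq> 0" using "0.prems"(2) unfolding symbol_stable_def by force
  then show ?case by (simp add: coeff_functional_def)
next
  case (Suc n)
  have "(\<Prod>i<Suc n. [:-r i, 1:]) = [:-r n, 1:] * (\<Prod>i<n. [:-r i, 1:])"
    by (simp add: mult.commute)
  then have "coeff_functional \<mu> (\<Prod>i<Suc n. [:-r i, 1:]) =
      coeff_functional (\<lambda>j. \<mu> (Suc j) - r n * \<mu> j) (\<Prod>i<n. [:-r i, 1:])"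
    by (simp only: coeff_functional_linear_factor)
  moreover have "symbol_stable n (\<lambda>j. \<mu> (Suc j) - r n * \<mu> j)"
    using symbol_stable_linear_factor Suc.prems by simp
  ultimately show ?case using Suc.IH Suc.prems by simp
qed

section \<open>The Cauchy--Euler operator\<close>

lemma poly_eq_coeff_functional:
  fixes p :: "'a::comm_semiring_1 poly"
  shows "poly p x = coeff_functional (\<lambda>j. x ^ j) p"
  by (simp add: poly_altdef coeff_functional_def mult.commute)

lemma coeff_functional_coeffwise:
  fixes q r :: "'a::comm_semiring_1 poly"
  assumes "\<And>j. coeff r j = f j * coeff q j"
  shows "coeff_functional \<mu> r = coeff_functional (\<lambda>j. \<mu> j * f j) q"
proof -
  have "degree r \<le> degree q"
    by (rule degree_le) (simp add: assms coeff_eq_0)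
  then have "coeff_functional \<mu> r = (\<Sum>j\<le>degree q. \<mu> j * coeff r j)"
    by (rule coeff_functional_eq_sum)
  then show ?thesis by (simp add: coeff_functional_def assms mult.assoc)
qed

definition cauchy_euler_op :: "'a::idom \<Rightarrow> 'a \<Rightarrow> 'a poly \<Rightarrow> 'a poly" where
  "cauchy_euler_op c d q = monom 1 2 * pderiv (pderiv q) + smult c (monom 1 1 * pderiv q) + smult d q"

lemma coeff_cauchy_euler_op:
  "coeff (cauchy_euler_op c d q) j = (of_nat j ^ 2 + (c - 1) * of_nat j + d) * coeff q j"
proof (cases j)
  case 0
  then show ?thesis by (simp add: cauchy_euler_op_def coeff_monom_mult)
next
  case (Suc i)
  show ?thesis
  proof (cases i)
    case 0
    then show ?thesis using Suc by (simp add: cauchy_euler_op_def coeff_monom_mult coeff_pderiv distrib_right)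
  next
    case (Suc l)
    then have "coeff (cauchy_euler_op c d q) j =
        (of_nat (Suc l) * of_nat (Suc (Suc l)) + c * of_nat (Suc (Suc l)) + d) * coeff q j"
      using \<open>j = Suc i\<close> by (simp add: cauchy_euler_op_def coeff_monom_mult coeff_pderiv) (simp add: algebra_simps)
    then show ?thesis using \<open>j = Suc i\<close> Suc by (simp add: algebra_simps power2_eq_square)
  qed
qed

lemma poly_cauchy_euler_op_linear_power:
  fixes c d t x :: "'a::idom"
  shows "(x + t) ^ 2 * poly (cauchy_euler_op c d ([:t, 1:] ^ m)) x =
    (x + t) ^ m * (of_nat m * of_nat (m - 1) * x ^ 2 + c * of_nat m * x * (x + t) + d * (x + t) ^ 2)"
proof (cases "m < 2")
  case True
  then consider "m = 0" | "m = 1" by linarith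
  then show ?thesis
    by cases (simp_all add: cauchy_euler_op_def pderiv_pCons poly_monom algebra_simps power2_eq_square)
next
  case False
  then obtain k where m: "m = Suc (Suc k)" by (metis add_2_eq_Suc le_add_diff_inverse not_less)
  have d1: "pderiv ([:t, 1:] ^ Suc (Suc k)) = smult (of_nat (Suc (Suc k))) ([:t, 1:] ^ Suc k)"
    by (simp only: pderiv_power_Suc) (simp add: pderiv_pCons)
  have d2: "pderiv (pderiv ([:t, 1:] ^ Suc (Suc k))) =
      smult (of_nat (Suc (Suc k)) * of_nat (Suc k)) ([:t, 1:] ^ k)"
    unfolding d1 pderiv_smult by (simp only: pderiv_power_Suc) (simp add: pderiv_pCons)
  have "poly (cauchy_euler_op c d ([:t, 1:] ^ m)) x =
      x ^ 2 * (of_nat (Suc (Suc k)) * of_nat (Suc k) * (x + t) ^ k) +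
      c * (x * (of_nat (Suc (Suc k)) * (x + t) ^ Suc k)) + d * (x + t) ^ Suc (Suc k)"
    unfolding cauchy_euler_op_def m d2 unfolding d1 by (simp add: poly_monom add.commute del: power_Suc)
  then show ?thesis unfolding m by (simp add: algebra_simps power2_eq_square)
qed

lemma coeff_functional_cauchy_euler:
  "coeff_functional (\<lambda>j. (of_nat j ^ 2 + (c - 1) * of_nat j + d) * x ^ j) q = poly (cauchy_euler_op c d q) x"
  by (simp add: poly_eq_coeff_functional coeff_functional_coeffwise[OF coeff_cauchy_euler_op] mult_ac)

lemma quadratic_root_real_nonpos:
  fixes A B C :: real and s :: complex
  assumes A: "A \<ge> 0" and B: "B \<ge> 0" and C: "C \<ge> 0" and disc: "4 * A * C \<le> B\<^sup>2"
    and nonzero: "A \<noteq> 0 \<or> B \<noteq> 0 \<or> C \<noteq> 0"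
    and root: "of_real A * s\<^sup>2 + of_real B * s + of_real C = 0"
  shows "Im s = 0 \<and> Re s \<le> 0"
proof -
  define a b where "a = Re s" and "b = Im s"
  have re: "A * (a\<^sup>2 - b\<^sup>2) + B * a + C = 0"
    using arg_cong[OF root, of Re] by (simp add: a_def b_def power2_eq_square)
  have im: "b * (2 * A * a + B) = 0"
    using arg_cong[OF root, of Im] by (simp add: a_def b_def power2_eq_square algebra_simps)
  have b: "b = 0"
  proof (rule ccontr)
    assume "b \<noteq> 0"
    then have lin: "2 * A * a + B = 0" using im by simp
    show False
    proof (cases "A = 0")
      case True
      then show False using lin re nonzero by simp
    next
      case False
      have "4 * A * (A * (a\<^sup>2 - b\<^sup>2) + B * a + C) = (2 * A * a + B)\<^sup>2 - 4 * A\<^sup>2 * b\<^sup>2 - (B\<^sup>2 - 4 * A * C)"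
        by (simp add: power2_eq_square algebra_simps)
      then have "4 * A\<^sup>2 * b\<^sup>2 + (B\<^sup>2 - 4 * A * C) = 0" using re lin by simp
      moreover have "A\<^sup>2 * b\<^sup>2 > 0" using False \<open>b \<noteq> 0\<close> by simp
      ultimately show False using disc by simp
    qed
  qed
  have "a \<le> 0"
  proof (rule ccontr)
    assume "\<not> a \<le> 0"
    then have "A * a\<^sup>2 \<ge> 0" "B * a \<ge> 0" "a > 0" using A B by simp_all
    moreover have "A * a\<^sup>2 + B * a + C = 0" using re b by simp
    ultimately show False using C nonzero by (smt (verit) mult_eq_0_iff zero_less_power2)
  qed
  then show ?thesis using b by (simp add: a_def b_def)
qed

lemma symbol_stable_cauchy_euler:
  fixes c d :: real and x :: complex
  assumes c: "c \<ge> 0" and d: "d \<ge> 0" and cd: "4 * d \<le> c\<^sup>2" and x: "Im x > 0"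
    and nondegenerate: "d \<noteq> 0 \<or> (c \<noteq> 0 \<and> m \<ge> 1) \<or> m \<ge> 2"
  shows "symbol_stable m (\<lambda>j. (of_nat j ^ 2 + (complex_of_real c - 1) * of_nat j + complex_of_real d) * x ^ j)"
  unfolding symbol_stable_def
proof (intro allI impI)
  fix t
  assume "poly (coeff_symbol m (\<lambda>j. (of_nat j ^ 2 + (complex_of_real c - 1) * of_nat j + complex_of_real d) * x ^ j)) t = 0"
  then have "poly (cauchy_euler_op (complex_of_real c) (complex_of_real d) ([:t, 1:] ^ m)) x = 0"
    by (simp add: poly_coeff_symbol coeff_functional_cauchy_euler)
  then have root: "(x + t) ^ m * (of_nat m * of_nat (m - 1) * x\<^sup>2 + of_real c * of_nat m * x * (x + t) + of_real d * (x + t)\<^sup>2) = 0"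
    using poly_cauchy_euler_op_linear_power[of x t "complex_of_real c" "complex_of_real d" m] by simp
  show "Im t < 0"
  proof (cases "x + t = 0")
    case True
    then have "t = - x" by (simp add: add_eq_0_iff)
    then show ?thesis using x by simp
  next
    case False
    have x0: "x \<noteq> 0" using x by auto
    text \<open>The quotient \<open>s = (x + t) / x\<close> solves a real quadratic with nonnegative coefficients
      and nonnegative discriminant, so it is real and nonpositive.\<close>
    define s where "s = (x + t) / x"
    have quadratic_xt: "of_nat m * of_nat (m - 1) * x\<^sup>2 + of_real c * of_nat m * x * (x + t) + of_real d * (x + t)\<^sup>2 = 0"
      using root False by simp
    have xt: "x + t = s * x" using x0 by (simp add: s_def)
    have "x\<^sup>2 * (of_real d * s\<^sup>2 + of_real (c * real m) * s + of_real (real m * real (m - 1))) = 0"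
      using quadratic_xt unfolding xt by (simp add: algebra_simps power2_eq_square)
    then have quadratic: "of_real d * s\<^sup>2 + of_real (c * real m) * s + of_real (real m * real (m - 1)) = 0"
      using x0 by simp
    have "4 * d * (real m * real (m - 1)) \<le> c\<^sup>2 * (real m * real (m - 1))"
      using cd by (intro mult_right_mono) auto
    also have "\<dots> \<le> c\<^sup>2 * (real m * real m)"
      by (intro mult_left_mono) auto
    finally have disc: "4 * d * (real m * real (m - 1)) \<le> (c * real m)\<^sup>2"
      by (simp add: power2_eq_square mult_ac)
    have "Im s = 0 \<and> Re s \<le> 0"
      using quadratic_root_real_nonpos[OF d _ _ disc _ quadratic] c nondegenerate by auto
    moreover have "t = x * (s - 1)" using x0 by (simp add: s_def field_simps)
    ultimately have "Im t = Im x * (Re s - 1)" by simp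
    then show ?thesis using x \<open>Im s = 0 \<and> Re s \<le> 0\<close> by (simp add: mult_pos_neg)
  qed
qed

lemma cauchy_euler_op_nonzero_upper_half_plane:
  fixes c d :: real and q :: "complex poly" and x :: complex
  assumes c: "c \<ge> 0" and d: "d \<ge> 0" and cd: "4 * d \<le> c\<^sup>2" and x: "Im x > 0" and q: "q \<noteq> 0"
    and real_roots: "\<And>z. poly q z = 0 \<Longrightarrow> Im z = 0"
    and nondegenerate: "d \<noteq> 0 \<or> (c \<noteq> 0 \<and> degree q \<ge> 1) \<or> degree q \<ge> 2"
  shows "poly (cauchy_euler_op (complex_of_real c) (complex_of_real d) q) x \<noteq> 0"
proof -
  define \<mu> where "\<mu> = (\<lambda>j. (of_nat j ^ 2 + (complex_of_real c - 1) * of_nat j + complex_of_real d) * x ^ j)"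
  obtain \<rho> where q_factors: "smult (lead_coeff q) (\<Prod>i<degree q. [:-\<rho> i, 1:]) = q"
    by (rule complex_poly_decompose')
  have \<rho>: "Im (\<rho> i) = 0" if "i < degree q" for i
    using real_roots poly_prod_linear_factors_root[OF that, of \<rho>]
    by (metis q_factors poly_smult mult_zero_right)
  have "symbol_stable (degree q) \<mu>"
    unfolding \<mu>_def using c d cd x nondegenerate by (rule symbol_stable_cauchy_euler)
  then have "coeff_functional \<mu> (\<Prod>i<degree q. [:-\<rho> i, 1:]) \<noteq> 0"
    using \<rho> by (intro coeff_functional_real_rooted_nonzero)
  moreover have "poly (cauchy_euler_op (complex_of_real c) (complex_of_real d) q) x =
      lead_coeff q * coeff_functional \<mu> (\<Prod>i<degree q. [:-\<rho> i, 1:])"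
    unfolding coeff_functional_cauchy_euler[symmetric] \<mu>_def[symmetric]
    by (subst q_factors[symmetric]) (simp add: coeff_functional_smult)
  ultimately show ?thesis using q by simp
qed

section \<open>Quadratic multiplier sequences\<close>

lemma coeff_Abs_poly_mult [simp]:
  fixes \<gamma> :: "nat \<Rightarrow> 'a::comm_semiring_0"
  shows "coeff (Abs_poly (\<lambda>k. \<gamma> k * coeff p k)) = (\<lambda>k. \<gamma> k * coeff p k)"
  by (rule coeff_Abs_poly[of "degree p"]) (simp add: coeff_eq_0)

lemma map_poly_quadratic_multiplier:
  "map_poly complex_of_real (Abs_poly (\<lambda>k. (real k ^ 2 + \<alpha> * real k + \<beta>) * coeff p k)) =
    cauchy_euler_op (complex_of_real (\<alpha> + 1)) (complex_of_real \<beta>) (map_poly complex_of_real p)"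
  by (rule poly_eqI) (simp add: coeff_map_poly coeff_cauchy_euler_op)

lemma not_only_real_zerosI:
  assumes "q \<noteq> 0" "poly (map_poly complex_of_real q) z = 0" "Im z \<noteq> 0"
  shows "\<not> only_real_zeros q"
  using assms by (auto simp: only_real_zeros_def complex_is_Real_iff)

lemma quadratic_multiplier_sequence:
  fixes \<alpha> \<beta> :: real
  assumes \<alpha>: "\<alpha> \<ge> -1" and \<beta>: "0 \<le> \<beta>" "\<beta> \<le> (\<alpha> + 1)\<^sup>2 / 4"
  shows "classical_multiplier_sequence (\<lambda>k. real k ^ 2 + \<alpha> * real k + \<beta>)"
  unfolding classical_multiplier_sequence_def
proof (intro allI impI)
  fix p :: "real poly"
  assume p: "only_real_zeros p"
  define T where "T = Abs_poly (\<lambda>k. (real k ^ 2 + \<alpha> * real k + \<beta>) * coeff p k)"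
  show "only_real_zeros T"
  proof (cases "p = 0 \<or> \<beta> = 0 \<and> (degree p = 0 \<or> degree p = 1 \<and> \<alpha> = -1)")
    case True
    text \<open>The multipliers vanish on all coefficients of \<open>p\<close>.\<close>
    have "coeff T k = 0" for k
      using True by (cases "k \<le> degree p") (auto simp: T_def coeff_eq_0 le_Suc_eq)
    then have "T = 0" by (simp add: poly_eq_iff)
    then show ?thesis by (simp add: only_real_zeros_def)
  next
    case False
    show ?thesis
    proof (rule ccontr)
      assume "\<not> only_real_zeros T"
      then obtain z where root: "poly (map_poly complex_of_real T) z = 0" and "Im z \<noteq> 0"
        by (auto simp: only_real_zeros_def complex_is_Real_iff)
      define x where "x = (if Im z > 0 then z else cnj z)"
      have x: "Im x > 0" using \<open>Im z \<noteq> 0\<close> by (simp add: x_def)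
      have "poly (map_poly complex_of_real T) x = 0"
        using root real_poly_cnj_root_iff[of "map_poly complex_of_real T" z]
        by (simp add: x_def coeff_map_poly)
      moreover have "p \<noteq> 0" using False by auto
      then have "poly (cauchy_euler_op (complex_of_real (\<alpha> + 1)) (complex_of_real \<beta>) (map_poly complex_of_real p)) x \<noteq> 0"
        using p False \<alpha> \<beta> x
        by (intro cauchy_euler_op_nonzero_upper_half_plane)
          (auto simp: only_real_zeros_def complex_is_Real_iff degree_map_poly field_simps)
      ultimately show False by (simp add: T_def map_poly_quadratic_multiplier)
    qed
  qed
qed

lemma only_real_zeros_monom_diff: "only_real_zeros (monom 1 (K + 2) - monom 1 K)"
  unfolding only_real_zeros_def
proof (intro disjI2 allI impI)
  fix z :: complex
  have map: "map_poly complex_of_real (monom 1 (K + 2) - monom 1 K) = monom 1 (K + 2) - monom 1 K"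
    by (rule poly_eqI) (simp add: coeff_map_poly coeff_monom)
  assume "poly (map_poly complex_of_real (monom 1 (K + 2) - monom 1 K)) z = 0"
  then have "z ^ K * (z - 1) * (z + 1) = 0"
    unfolding map by (simp add: poly_monom algebra_simps power2_eq_square)
  then have "z ^ K = 0 \<or> z - 1 = 0 \<or> z + 1 = 0" by (simp only: mult_eq_0_iff) blast
  then have "z = 0 \<or> z = 1 \<or> z = -1" using eq_neg_iff_add_eq_0[of z 1] by auto
  then show "z \<in> \<real>" by auto
qed

lemma multiplier_sequence_sign_pattern:
  assumes cms: "classical_multiplier_sequence \<gamma>"
  shows "0 \<le> \<gamma> K * \<gamma> (K + 2)"
proof (rule ccontr)
  assume "\<not> 0 \<le> \<gamma> K * \<gamma> (K + 2)"
  then have product: "\<gamma> K * \<gamma> (K + 2) < 0" by simp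
  then have ratio: "\<gamma> K / \<gamma> (K + 2) < 0" by (metis divide_less_0_iff mult_less_0_iff)
  have "\<gamma> K \<noteq> 0" using product by auto
  define p :: "real poly" where "p = monom 1 (K + 2) - monom 1 K"
  have "only_real_zeros p" unfolding p_def by (rule only_real_zeros_monom_diff)
  then have T_real: "only_real_zeros (Abs_poly (\<lambda>k. \<gamma> k * coeff p k))"
    using cms by (simp add: classical_multiplier_sequence_def)
  define T where "T = Abs_poly (\<lambda>k. \<gamma> k * coeff p k)"
  have coeff_T: "coeff T k = \<gamma> k * coeff p k" for k by (simp add: T_def)
  have T_complex: "map_poly complex_of_real T =
      monom (of_real (\<gamma> (K + 2))) (K + 2) - monom (of_real (\<gamma> K)) K"
    by (rule poly_eqI) (simp add: coeff_T p_def coeff_map_poly coeff_monom)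
  have "coeff T K \<noteq> 0" using \<open>\<gamma> K \<noteq> 0\<close> by (simp add: coeff_T p_def coeff_monom)
  then have "T \<noteq> 0" by auto
  text \<open>\<open>\<gamma> (K + 2) z\<^sup>2 = \<gamma> K\<close> has a purely imaginary solution.\<close>
  define z where "z = \<i> * complex_of_real (sqrt (- \<gamma> K / \<gamma> (K + 2)))"
  have z: "z\<^sup>2 = of_real (\<gamma> K / \<gamma> (K + 2))"
    using ratio by (simp add: z_def power_mult_distrib flip: of_real_power)
  have "poly (map_poly complex_of_real T) z = z ^ K * (of_real (\<gamma> (K + 2)) * z\<^sup>2 - of_real (\<gamma> K))"
    by (simp add: T_complex poly_monom algebra_simps power2_eq_square)
  also have "\<dots> = 0"
  proof -
    have "\<gamma> (K + 2) \<noteq> 0" using product by auto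
    then show ?thesis using z by (simp add: field_simps)
  qed
  finally have "poly (map_poly complex_of_real T) z = 0" .
  moreover have "Im z \<noteq> 0" using ratio product by (auto simp: z_def)
  ultimately have "\<not> only_real_zeros T" by (rule not_only_real_zerosI[OF \<open>T \<noteq> 0\<close>])
  then show False using T_real by (simp add: T_def)
qed

lemma quadratic_multiplier_nonneg:
  fixes \<alpha> \<beta> :: real
  assumes cms: "classical_multiplier_sequence (\<lambda>k. real k ^ 2 + \<alpha> * real k + \<beta>)"
  shows "0 \<le> real k ^ 2 + \<alpha> * real k + \<beta>"
proof (rule ccontr)
  define \<gamma> where "\<gamma> = (\<lambda>k::nat. real k ^ 2 + \<alpha> * real k + \<beta>)"
  assume "\<not> 0 \<le> real k ^ 2 + \<alpha> * real k + \<beta>"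
  then have "\<gamma> k < 0" by (simp add: \<gamma>_def)
  text \<open>By the sign pattern and convexity of \<open>\<gamma>\<close> (its second difference is 2),
    a negative term forces the next one to be negative.\<close>
  have step: "\<gamma> (Suc n) < 0" if "\<gamma> n < 0" for n
  proof -
    have "0 \<le> \<gamma> n * \<gamma> (n + 2)"
      using multiplier_sequence_sign_pattern[OF cms] by (simp add: \<gamma>_def)
    then have "\<gamma> (n + 2) \<le> 0" using that by (simp add: zero_le_mult_iff)
    moreover have "\<gamma> (Suc n) = (\<gamma> n + \<gamma> (n + 2)) / 2 - 1"
      by (simp add: \<gamma>_def power2_eq_square algebra_simps)
    ultimately show ?thesis using that by simp
  qed
  have negative: "\<gamma> (k + j) < 0" for j
    by (induction j) (use \<open>\<gamma> k < 0\<close> step in auto)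
  define n where "n = k + nat \<lceil>\<bar>\<alpha>\<bar> + \<bar>\<beta>\<bar>\<rceil> + 1"
  have n: "real n \<ge> \<bar>\<alpha>\<bar> + \<bar>\<beta>\<bar> + 1" unfolding n_def by linarith
  have "- \<bar>\<alpha>\<bar> * real n \<le> \<alpha> * real n" using mult_right_mono[of "- \<bar>\<alpha>\<bar>" \<alpha> "real n"] by simp
  moreover have "1 * (\<bar>\<beta>\<bar> + 1) \<le> real n * (real n - \<bar>\<alpha>\<bar>)"
    using n by (intro mult_mono) auto
  ultimately have "0 \<le> \<gamma> n" by (simp add: \<gamma>_def power2_eq_square algebra_simps)
  then show False using negative[of "n - k"] by (simp add: n_def)
qed

lemma quadratic_nonreal_root:
  fixes A B C :: real
  assumes "A \<noteq> 0" and "B\<^sup>2 < 4 * A * C"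
  obtains z :: complex where "Im z \<noteq> 0" and "of_real A * z\<^sup>2 + of_real B * z + of_real C = 0"
proof
  define D where "D = sqrt (4 * A * C - B\<^sup>2)"
  have D: "D > 0" "D\<^sup>2 = 4 * A * C - B\<^sup>2" using assms(2) by (simp_all add: D_def)
  define z where "z = (of_real (-B) + \<i> * of_real D) / of_real (2 * A)"
  show "Im z \<noteq> 0" using assms(1) D by (simp add: z_def)
  have "of_real (2 * A) * z + of_real B = \<i> * of_real D"
    using assms(1) by (simp add: z_def)
  then have "of_real (4 * A) * (of_real A * z\<^sup>2 + of_real B * z + of_real C) =
      (\<i> * of_real D)\<^sup>2 + of_real (4 * A * C - B\<^sup>2)"
    by (simp flip: \<open>of_real (2 * A) * z + of_real B = \<i> * of_real D\<close>)
      (simp add: algebra_simps power2_eq_square)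
  also have "\<dots> = 0" unfolding D(2)[symmetric] by (simp add: power_mult_distrib of_real_power)
  finally show "of_real A * z\<^sup>2 + of_real B * z + of_real C = 0" using assms(1) by simp
qed

lemma map_poly_of_real_linear_power:
  "map_poly complex_of_real ([:a, b:] ^ n) = [:complex_of_real a, complex_of_real b:] ^ n"
proof (rule poly_eqI)
  fix i
  have "degree ([:a, b:] ^ n) \<le> n" "degree ([:complex_of_real a, complex_of_real b:] ^ n) \<le> n"
    by (rule order_trans[OF degree_power_le], simp)+
  then show "coeff (map_poly complex_of_real ([:a, b:] ^ n)) i = coeff ([:complex_of_real a, complex_of_real b:] ^ n) i"
    by (cases "i \<le> n") (simp_all add: coeff_map_poly coeff_linear_poly_power coeff_eq_0)
qed

lemma only_real_zeros_one_plus_x_power: "only_real_zeros ([:1, 1:] ^ n)"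
  unfolding only_real_zeros_def
proof (intro disjI2 allI impI)
  fix w :: complex
  assume "poly (map_poly complex_of_real ([:1, 1:] ^ n)) w = 0"
  then have "w = -1"
    using map_poly_of_real_linear_power[of 1 1 n] eq_neg_iff_add_eq_0[of w 1] by (simp add: add.commute)
  then show "w \<in> \<real>" by simp
qed

lemma poly_quadratic_multiplier_one_plus_x_power:
  fixes \<alpha> \<beta> :: real and n :: nat and w :: complex
  defines "m \<equiv> real n"
  shows "(w + 1)\<^sup>2 * poly (map_poly complex_of_real
      (Abs_poly (\<lambda>k. (real k ^ 2 + \<alpha> * real k + \<beta>) * coeff ([:1, 1:] ^ n) k))) w =
    (w + 1) ^ n * (of_real (m * (m - 1) + (\<alpha> + 1) * m + \<beta>) * w\<^sup>2 + of_real ((\<alpha> + 1) * m + 2 * \<beta>) * w + of_real \<beta>)"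
proof -
  have "(w + 1)\<^sup>2 * poly (map_poly complex_of_real
      (Abs_poly (\<lambda>k. (real k ^ 2 + \<alpha> * real k + \<beta>) * coeff ([:1, 1:] ^ n) k))) w =
      (w + 1) ^ n * (of_nat n * of_nat (n - 1) * w\<^sup>2 + of_real (\<alpha> + 1) * of_nat n * w * (w + 1) + of_real \<beta> * (w + 1)\<^sup>2)"
    unfolding map_poly_quadratic_multiplier map_poly_of_real_linear_power
    by (simp only: of_real_1 poly_cauchy_euler_op_linear_power)
  also have "of_nat n * of_nat (n - 1) * w\<^sup>2 + of_real (\<alpha> + 1) * of_nat n * w * (w + 1) + of_real \<beta> * (w + 1)\<^sup>2 =
      of_real (m * (m - 1) + (\<alpha> + 1) * m + \<beta>) * w\<^sup>2 + of_real ((\<alpha> + 1) * m + 2 * \<beta>) * w + of_real \<beta>"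
    by (cases n) (simp_all add: m_def algebra_simps power2_eq_square)
  finally show ?thesis .
qed

lemma quadratic_multiplier_discriminant:
  fixes \<alpha> \<beta> :: real
  assumes cms: "classical_multiplier_sequence (\<lambda>k. real k ^ 2 + \<alpha> * real k + \<beta>)"
  shows "4 * \<beta> \<le> (\<alpha> + 1)\<^sup>2"
proof (rule ccontr)
  define c e where "c = \<alpha> + 1" and "e = 4 * \<beta> - c\<^sup>2"
  assume "\<not> 4 * \<beta> \<le> (\<alpha> + 1)\<^sup>2"
  then have e: "e > 0" by (simp add: e_def c_def)
  then have \<beta>: "\<beta> > 0" unfolding e_def by (smt (verit) zero_le_power2)
  text \<open>Test on \<open>(1 + x)\<^sup>n\<close> with \<open>n > 4\<beta>/e\<close>: up to powers of \<open>1 + x\<close> the image is a real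
    quadratic with negative discriminant.\<close>
  define n where "n = Suc (Suc (nat \<lceil>4 * \<beta> / e\<rceil>))"
  define m where "m = real n"
  have "m > 4 * \<beta> / e" unfolding m_def n_def by linarith
  then have me: "m * e > 4 * \<beta>" using e by (simp add: field_simps)
  have m2: "m \<ge> 2" by (simp add: m_def n_def)
  define A B where "A = m * (m - 1) + c * m + \<beta>" and "B = c * m + 2 * \<beta>"
  have "4 * A * \<beta> - B\<^sup>2 = m * (m * e - 4 * \<beta>)"
    by (simp add: A_def B_def e_def power2_eq_square algebra_simps)
  moreover have "m * (m * e - 4 * \<beta>) > 0" using me m2 by (intro mult_pos_pos) auto
  ultimately have disc: "B\<^sup>2 < 4 * A * \<beta>" by linarith
  then have "A \<noteq> 0" by (smt (verit) zero_le_power2 mult_eq_0_iff)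
  then obtain z :: complex where "Im z \<noteq> 0" and z: "of_real A * z\<^sup>2 + of_real B * z + of_real \<beta> = 0"
    using disc by (rule quadratic_nonreal_root)
  define p :: "real poly" where "p = [:1, 1:] ^ n"
  have T_real: "only_real_zeros (Abs_poly (\<lambda>k. (real k ^ 2 + \<alpha> * real k + \<beta>) * coeff p k))"
    using cms only_real_zeros_one_plus_x_power by (simp add: classical_multiplier_sequence_def p_def)
  define T where "T = Abs_poly (\<lambda>k. (real k ^ 2 + \<alpha> * real k + \<beta>) * coeff p k)"
  have T_complex: "(w + 1)\<^sup>2 * poly (map_poly complex_of_real T) w =
      (w + 1) ^ n * (of_real A * w\<^sup>2 + of_real B * w + of_real \<beta>)" for w
    unfolding T_def p_def A_def B_def m_def c_def by (rule poly_quadratic_multiplier_one_plus_x_power)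
  have "Im (z + 1) \<noteq> 0" using \<open>Im z \<noteq> 0\<close> by simp
  then have "z + 1 \<noteq> 0" by (metis zero_complex.sel(2))
  then have "poly (map_poly complex_of_real T) z = 0" using T_complex[of z] z by simp
  moreover have "T \<noteq> 0" using T_complex[of 0] \<beta> by auto
  ultimately have "\<not> only_real_zeros T" using \<open>Im z \<noteq> 0\<close> by (intro not_only_real_zerosI)
  then show False using T_real by (simp add: T_def)
qed

lemma quadratic_nonneg_on_nat_imp_ge_minus_one:
  fixes \<alpha> \<beta> :: real
  assumes nonneg: "\<And>k::nat. 0 \<le> real k ^ 2 + \<alpha> * real k + \<beta>" and disc: "4 * \<beta> \<le> (\<alpha> + 1)\<^sup>2"
  shows "\<alpha> \<ge> -1"
proof (rule ccontr)
  assume "\<not> \<alpha> \<ge> -1"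
  text \<open>Evaluate at the natural number \<open>k\<close> closest to the vertex \<open>-\<alpha>/2 > 1/2\<close>.\<close>
  define k where "k = nat \<lfloor>1 - (\<alpha> + 1) / 2\<rfloor>"
  have k: "real k = of_int \<lfloor>1 - (\<alpha> + 1) / 2\<rfloor>" using \<open>\<not> \<alpha> \<ge> -1\<close> unfolding k_def by simp
  have "real k > - \<alpha> / 2 - 1 / 2" "real k \<le> - \<alpha> / 2 + 1 / 2"
    using of_int_floor_le[of "1 - (\<alpha> + 1) / 2"] real_of_int_floor_add_one_gt[of "1 - (\<alpha> + 1) / 2"]
    unfolding k by (simp_all add: field_simps)
  then have "\<bar>real k + \<alpha> / 2\<bar> \<le> 1 / 2" by linarith
  then have "\<bar>real k + \<alpha> / 2\<bar>\<^sup>2 \<le> (1 / 2)\<^sup>2" by (intro power_mono) auto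
  then have vertex: "(real k + \<alpha> / 2)\<^sup>2 \<le> 1 / 4" by (simp add: power2_eq_square)
  have "real k ^ 2 + \<alpha> * real k + \<beta> = (real k + \<alpha> / 2)\<^sup>2 + \<beta> - \<alpha>\<^sup>2 / 4"
    by (simp add: power2_eq_square algebra_simps)
  also have "\<dots> \<le> 1 / 4 + (\<alpha> + 1)\<^sup>2 / 4 - \<alpha>\<^sup>2 / 4" using vertex disc by linarith
  also have "\<dots> = (\<alpha> + 1) / 2" by (simp add: power2_eq_square field_simps)
  also have "\<dots> < 0" using \<open>\<not> \<alpha> \<ge> -1\<close> by simp
  finally show False using nonneg[of k] by simp
qed

theorem proposition4p4:
  fixes \<alpha> \<beta> :: real
  shows "classical_multiplier_sequence (\<lambda>k. real k ^ 2 + \<alpha> * real k + \<beta>) \<longleftrightarrow>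
           \<alpha> \<ge> -1 \<and> 0 \<le> \<beta> \<and> \<beta> \<le> (\<alpha> + 1) ^ 2 / 4"
proof
  assume cms: "classical_multiplier_sequence (\<lambda>k. real k ^ 2 + \<alpha> * real k + \<beta>)"
  have disc: "4 * \<beta> \<le> (\<alpha> + 1)\<^sup>2" using cms by (rule quadratic_multiplier_discriminant)
  have "\<alpha> \<ge> -1" using quadratic_multiplier_nonneg[OF cms] disc by (rule quadratic_nonneg_on_nat_imp_ge_minus_one)
  moreover have "0 \<le> \<beta>" using quadratic_multiplier_nonneg[OF cms, of 0] by simp
  ultimately show "\<alpha> \<ge> -1 \<and> 0 \<le> \<beta> \<and> \<beta> \<le> (\<alpha> + 1) ^ 2 / 4" using disc by simp
next
  assume "\<alpha> \<ge> -1 \<and> 0 \<le> \<beta> \<and> \<beta> \<le> (\<alpha> + 1) ^ 2 / 4"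
  then show "classical_multiplier_sequence (\<lambda>k. real k ^ 2 + \<alpha> * real k + \<beta>)"
    by (intro quadratic_multiplier_sequence) auto
qed

end
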